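(* Let $(X,\mathcal{B},\mu,G)$ be a measure-preserving system and $S\subset G$. Then (1) the collection of $S$-almost periodic functions is a closed linear subspace of $L^2(\mu)$; (2) the collection of measurable sets $A\in\mathcal{B}$ with $h^*_{\mu,S}(\{A,A^c\})=0$ is a sub-$\sigma$-algebra of $\mathcal{B}$; moreover, if $S=G$, this sub-$\sigma$-algebra is $G$-invariant.
   Context: $(X,\mathcal{B},\mu)$ is a standard probability space and the discrete group $G$ acts measurably and preserves $\mu$. $f\in L^2(\mu)$ is $S$-almost periodic if $\{f\circ g\colon g\in S\}$ is precompact in $L^2(\mu)$. For a finite partition $\alpha$ (identified mod $0$), $g^{-1}\alpha=\{g^{-1}A\colon A\in\alpha\}$, $H_\mu(\alpha)=-\sum_{A\in\alpha}\mu(A)\log\mu(A)$, and $h^*_{\mu,S}(\alpha)=\limsup_n\frac1n\sup_{\alpha_1,\dots,\alpha_n\in\{g^{-1}\alpha\colon g\in S\}}H_\mu(\bigvee_{i=1}^n\alpha_i)$. $G$-invariant means $g^{-1}A$ belongs to the collection whenever $A$ does. *)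

theory Defs
  imports "HOL-Probability.Probability" "HOL-Algebra.Group"
begin

definition mps :: "'a measure \<Rightarrow> ('g, 'b) monoid_scheme \<Rightarrow> ('g \<Rightarrow> 'a \<Rightarrow> 'a) \<Rightarrow> bool" where
  "mps M G T \<longleftrightarrow> prob_space M \<and> group G \<and>
     (\<forall>g\<in>carrier G. T g \<in> M \<rightarrow>\<^sub>M M \<and> distr M M (T g) = M) \<and>
     (\<forall>x\<in>space M. T \<one>\<^bsub>G\<^esub> x = x) \<and>
     (\<forall>g\<in>carrier G. \<forall>h\<in>carrier G. \<forall>x\<in>space M. T (g \<otimes>\<^bsub>G\<^esub> h) x = T g (T h x))"

definition L2 :: "'a measure \<Rightarrow> ('a \<Rightarrow> complex) set" where
  "L2 M = {f. f \<in> borel_measurable M \<and> integrable M (\<lambda>x. (cmod (f x))\<^sup>2)}"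

definition L2_norm :: "'a measure \<Rightarrow> ('a \<Rightarrow> complex) \<Rightarrow> real" where
  "L2_norm M f = sqrt (\<integral>x. (cmod (f x))\<^sup>2 \<partial>M)"

text \<open>Precompactness in L^2 (a metric space after identifying a.e.-equal functions):
  every sequence in the set has a subsequence converging in L^2 to an element of L^2.\<close>
definition L2_precompact :: "'a measure \<Rightarrow> ('a \<Rightarrow> complex) set \<Rightarrow> bool" where
  "L2_precompact M F \<longleftrightarrow>
     (\<forall>u :: nat \<Rightarrow> ('a \<Rightarrow> complex). (\<forall>n. u n \<in> F) \<longrightarrow>
        (\<exists>r h. strict_mono r \<and> h \<in> L2 M \<and>
               (\<lambda>n. L2_norm M (\<lambda>x. u (r n) x - h x)) \<longlonglongrightarrow> 0))"

definition almost_periodic ::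
    "'a measure \<Rightarrow> ('g \<Rightarrow> 'a \<Rightarrow> 'a) \<Rightarrow> 'g set \<Rightarrow> ('a \<Rightarrow> complex) \<Rightarrow> bool" where
  "almost_periodic M T S f \<longleftrightarrow> f \<in> L2 M \<and> L2_precompact M ((\<lambda>g. f \<circ> T g) ` S)"

definition pull_part :: "'a measure \<Rightarrow> ('g \<Rightarrow> 'a \<Rightarrow> 'a) \<Rightarrow> 'g \<Rightarrow> 'a set set \<Rightarrow> 'a set set" where
  "pull_part M T g P = (\<lambda>A. T g -` A \<inter> space M) ` P"

definition join_part :: "'a set set \<Rightarrow> 'a set set \<Rightarrow> 'a set set" where
  "join_part P Q = {A \<inter> B | A B. A \<in> P \<and> B \<in> Q}"

fun join_list :: "'a measure \<Rightarrow> 'a set set list \<Rightarrow> 'a set set" where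
  "join_list M [] = {space M}"
| "join_list M (P # Ps) = join_part P (join_list M Ps)"

text \<open>Shannon entropy (natural logarithm; the convention 0 log 0 = 0 is automatic
  since the summand is t * ln t with t = 0).\<close>
definition part_entropy :: "'a measure \<Rightarrow> 'a set set \<Rightarrow> real" where
  "part_entropy M P = - (\<Sum>A\<in>P. measure M A * ln (measure M A))"

text \<open>The supremum is taken in the extended reals; 0 is inserted, which changes nothing
  (entropies are nonnegative) except fixing the value 0 when S is empty.\<close>
definition upper_entropy ::
    "'a measure \<Rightarrow> ('g \<Rightarrow> 'a \<Rightarrow> 'a) \<Rightarrow> 'g set \<Rightarrow> 'a set set \<Rightarrow> ereal" where
  "upper_entropy M T S P =
     limsup (\<lambda>n::nat. ereal (1 / real n) *
        Sup (insert 0 ((\<lambda>gs. ereal (part_entropy M (join_list M (map (\<lambda>g. pull_part M T g P) gs))))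
                       ` {gs. set gs \<subseteq> S \<and> length gs = n})))"

end

theory Submission
  imports Defs "HOL-Library.Diagonal_Subsequence" "HOL-Real_Asymp.Real_Asymp"
begin

text \<open>
  (1) Composition with a measure-preserving map is an isometry of \<open>L\<^sup>2\<close>. For a sum of two
  almost periodic functions one extracts a subsequence along which both orbits converge. For an
  \<open>L\<^sup>2\<close>-limit \<open>f\<close> of almost periodic functions \<open>u\<^sub>k\<close>, a diagonal subsequence makes every orbit
  \<open>u\<^sub>k \<circ> T g\<^sub>i\<close> Cauchy, hence (an \<open>\<epsilon>/3\<close> argument) also \<open>f \<circ> T g\<^sub>i\<close>, and completeness of
  \<open>L\<^sup>2\<close> provides the limit.

  (2) The atoms of \<open>g\<^sub>1\<^sup>-\<^sup>1{A,A\<^sup>c} \<or> \<dots> \<or> g\<^sub>n\<^sup>-\<^sup>1{A,A\<^sup>c}\<close> are the fibres of the itinerary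
  \<open>x \<mapsto> (T g\<^sub>i x \<in> A)\<^sub>i\<close>, so their entropy is the Shannon entropy of a simple random variable.
  Subadditivity of entropy gives \<open>h\<^sup>*(B \<union> D) \<le> h\<^sup>*(B) + h\<^sup>*(D)\<close> and
  \<open>h\<^sup>*(B \<union> D) \<le> h\<^sup>*(B) + H{D,D\<^sup>c}\<close>; with \<open>D\<close> the small remainder of a countable union and the binary
  entropy being continuous at \<open>0\<close>, zero entropy passes to countable unions. The set \<open>T g\<^sup>-\<^sup>1 A\<close> has
  along \<open>g\<^sub>1, \<dots>, g\<^sub>n\<close> the itineraries of \<open>A\<close> along \<open>g g\<^sub>1, \<dots>, g g\<^sub>n\<close>, which gives invariance when \<open>S = G\<close>.
\<close>

section \<open>Square-integrable functions\<close>

lemma L2_norm_nonneg: "0 \<le> L2_norm M f"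
  by (simp add: L2_norm_def)

lemma L2_borel_measurable: "f \<in> L2 M \<Longrightarrow> f \<in> borel_measurable M"
  by (simp add: L2_def)

lemma L2_integrable_square: "f \<in> L2 M \<Longrightarrow> integrable M (\<lambda>x. (cmod (f x))\<^sup>2)"
  by (simp add: L2_def)

lemma L2_norm_power2: "L2_norm M f ^ 2 = (\<integral>x. (cmod (f x))\<^sup>2 \<partial>M)"
  unfolding L2_norm_def by (simp add: integral_nonneg_AE)

lemma nn_integral_square_eq_L2_norm:
  "f \<in> L2 M \<Longrightarrow> (\<integral>\<^sup>+x. ennreal ((cmod (f x))\<^sup>2) \<partial>M) = ennreal (L2_norm M f ^ 2)"
  by (subst nn_integral_eq_integral) (auto simp: L2_def L2_norm_power2)

lemma L2_norm_minus_commute: "L2_norm M (\<lambda>x. f x - h x) = L2_norm M (\<lambda>x. h x - f x)"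
  unfolding L2_norm_def by (simp add: norm_minus_commute)

lemma L2_norm_mult: "L2_norm M (\<lambda>x. c * f x) = cmod c * L2_norm M f"
  by (simp add: L2_norm_def norm_mult power_mult_distrib real_sqrt_mult)

lemma norm_add_power2_le:
  fixes a b :: "'a::real_normed_vector"
  assumes t: "t > 0"
  shows "(norm (a + b))\<^sup>2 \<le> (1 + t) * (norm a)\<^sup>2 + (1 + 1/t) * (norm b)\<^sup>2"
proof -
  have "0 \<le> (t * norm a - norm b)\<^sup>2 / t" using t by simp
  also have "\<dots> = t * (norm a)\<^sup>2 - 2 * norm a * norm b + (norm b)\<^sup>2 / t"
    using t by (simp add: power2_eq_square field_simps)
  finally have "2 * norm a * norm b \<le> t * (norm a)\<^sup>2 + (norm b)\<^sup>2 / t" by simp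
  moreover have "(norm (a + b))\<^sup>2 \<le> (norm a + norm b)\<^sup>2"
    by (simp add: norm_triangle_ineq power_mono)
  ultimately show ?thesis by (simp add: power2_sum algebra_simps)
qed

lemma L2_add:
  assumes f: "f \<in> L2 M" and h: "h \<in> L2 M"
  shows "(\<lambda>x. f x + h x) \<in> L2 M"
proof -
  have [measurable]: "f \<in> borel_measurable M" "h \<in> borel_measurable M"
    using f h by (simp_all add: L2_borel_measurable)
  have "integrable M (\<lambda>x. (cmod (f x + h x))\<^sup>2)"
  proof (rule Bochner_Integration.integrable_bound)
    show "integrable M (\<lambda>x. 2 * (cmod (f x))\<^sup>2 + 2 * (cmod (h x))\<^sup>2)"
      using f h by (intro Bochner_Integration.integrable_add integrable_mult_right L2_integrable_square)
    show "AE x in M. norm ((cmod (f x + h x))\<^sup>2) \<le> norm (2 * (cmod (f x))\<^sup>2 + 2 * (cmod (h x))\<^sup>2)"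
    proof (rule AE_I2)
      fix x
      show "norm ((cmod (f x + h x))\<^sup>2) \<le> norm (2 * (cmod (f x))\<^sup>2 + 2 * (cmod (h x))\<^sup>2)"
        using norm_add_power2_le[of 1 "f x" "h x"] by simp
    qed
  qed measurable
  then show ?thesis by (simp add: L2_def)
qed

lemma L2_mult: "f \<in> L2 M \<Longrightarrow> (\<lambda>x. c * f x) \<in> L2 M"
  by (auto simp: L2_def norm_mult power_mult_distrib)

lemma L2_diff: "f \<in> L2 M \<Longrightarrow> h \<in> L2 M \<Longrightarrow> (\<lambda>x. f x - h x) \<in> L2 M"
  using L2_add[OF _ L2_mult, of f M h "-1"] by simp

lemma L2_norm_add_power2_le:
  assumes f: "f \<in> L2 M" and h: "h \<in> L2 M" and t: "t > 0"
  shows "L2_norm M (\<lambda>x. f x + h x) ^ 2 \<le> (1 + t) * L2_norm M f ^ 2 + (1 + 1/t) * L2_norm M h ^ 2"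
proof -
  have "L2_norm M (\<lambda>x. f x + h x) ^ 2
      \<le> (\<integral>x. (1 + t) * (cmod (f x))\<^sup>2 + (1 + 1/t) * (cmod (h x))\<^sup>2 \<partial>M)"
    unfolding L2_norm_power2
    using f h L2_add[OF f h] norm_add_power2_le[OF t]
    by (intro integral_mono Bochner_Integration.integrable_add integrable_mult_right L2_integrable_square)
  also have "\<dots> = (1 + t) * L2_norm M f ^ 2 + (1 + 1/t) * L2_norm M h ^ 2"
    using f h by (simp add: L2_norm_power2 L2_integrable_square)
  finally show ?thesis .
qed

lemma L2_norm_triangle:
  assumes f: "f \<in> L2 M" and h: "h \<in> L2 M"
  shows "L2_norm M (\<lambda>x. f x + h x) \<le> L2_norm M f + L2_norm M h"
proof (rule field_le_epsilon)
  fix e :: real assume e: "0 < e"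
  \<comment> \<open>With \<open>t = b/a\<close> the weighted bound becomes \<open>(a + b)\<^sup>2\<close>; the slack \<open>e\<close> keeps \<open>a\<close> and \<open>b\<close> positive.\<close>
  define a where "a = L2_norm M f + e/2"
  define b where "b = L2_norm M h + e/2"
  have a: "a > 0" and b: "b > 0"
    using e L2_norm_nonneg[of M] unfolding a_def b_def by (simp_all add: add_nonneg_pos)
  have "L2_norm M (\<lambda>x. f x + h x) ^ 2 \<le> (1 + b/a) * L2_norm M f ^ 2 + (1 + a/b) * L2_norm M h ^ 2"
    using L2_norm_add_power2_le[OF f h, of "b/a"] a b by simp
  also have "\<dots> \<le> (1 + b/a) * a ^ 2 + (1 + a/b) * b ^ 2"
    using a b e L2_norm_nonneg[of M] unfolding a_def b_def
    by (intro add_mono mult_left_mono power_mono) auto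
  also have "\<dots> = (a + b) ^ 2"
    using a b by (simp add: power2_eq_square field_simps)
  finally have "L2_norm M (\<lambda>x. f x + h x) \<le> a + b"
    by (rule power2_le_imp_le) (use a b in simp)
  then show "L2_norm M (\<lambda>x. f x + h x) \<le> L2_norm M f + L2_norm M h + e"
    by (simp add: a_def b_def)
qed

lemma L2_norm_triangle_diff:
  assumes "f \<in> L2 M" "g \<in> L2 M" "h \<in> L2 M"
  shows "L2_norm M (\<lambda>x. f x - h x) \<le> L2_norm M (\<lambda>x. f x - g x) + L2_norm M (\<lambda>x. g x - h x)"
  using L2_norm_triangle[OF L2_diff L2_diff, of f M g g h] assms by simp

lemma L2_comp_measure_preserving:
  assumes T[measurable]: "T \<in> M \<rightarrow>\<^sub>M M" and distr_T: "distr M M T = M" and f: "f \<in> L2 M"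
  shows "(\<lambda>x. f (T x)) \<in> L2 M" and "L2_norm M (\<lambda>x. f (T x)) = L2_norm M f"
proof -
  have [measurable]: "f \<in> borel_measurable M" using f by (rule L2_borel_measurable)
  have "integrable (distr M M T) (\<lambda>y. (cmod (f y))\<^sup>2)"
    using f distr_T by (simp add: L2_integrable_square)
  then show "(\<lambda>x. f (T x)) \<in> L2 M"
    by (simp add: L2_def integrable_distr_eq)
  have "(\<integral>x. (cmod (f (T x)))\<^sup>2 \<partial>M) = (\<integral>y. (cmod (f y))\<^sup>2 \<partial>distr M M T)"
    by (simp add: integral_distr)
  then show "L2_norm M (\<lambda>x. f (T x)) = L2_norm M f"
    by (simp add: L2_norm_def distr_T)
qed

definition L2_Cauchy :: "'a measure \<Rightarrow> (nat \<Rightarrow> 'a \<Rightarrow> complex) \<Rightarrow> bool" where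
  "L2_Cauchy M w \<longleftrightarrow> (\<forall>e>0. \<exists>N. \<forall>i\<ge>N. \<forall>j\<ge>N. L2_norm M (\<lambda>x. w i x - w j x) < e)"

lemma L2_Cauchy_if_convergent:
  assumes w: "\<And>i. w i \<in> L2 M" and h: "h \<in> L2 M"
    and lim: "(\<lambda>n. L2_norm M (\<lambda>x. w n x - h x)) \<longlonglongrightarrow> 0"
  shows "L2_Cauchy M w"
  unfolding L2_Cauchy_def
proof (intro allI impI)
  fix e :: real assume "e > 0"
  then obtain N where N: "\<And>n. n \<ge> N \<Longrightarrow> L2_norm M (\<lambda>x. w n x - h x) < e/2"
    using order_tendstoD(2)[OF lim, of "e/2"] unfolding eventually_sequentially by auto
  have "L2_norm M (\<lambda>x. w i x - w j x) < e" if "i \<ge> N" "j \<ge> N" for i j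
    using L2_norm_triangle_diff[OF w h w, of i j] N[OF that(1)] N[OF that(2)]
      L2_norm_minus_commute[of M "w j" h] by linarith
  then show "\<exists>N. \<forall>i\<ge>N. \<forall>j\<ge>N. L2_norm M (\<lambda>x. w i x - w j x) < e" by blast
qed

lemma L2_Cauchy_shift: "L2_Cauchy M (\<lambda>i. w (m + i)) \<Longrightarrow> L2_Cauchy M w"
  unfolding L2_Cauchy_def
proof (intro allI impI)
  fix e :: real assume "e > 0" and "\<forall>e>0. \<exists>N. \<forall>i\<ge>N. \<forall>j\<ge>N. L2_norm M (\<lambda>x. w (m + i) x - w (m + j) x) < e"
  then obtain N where N: "\<And>i j. i \<ge> N \<Longrightarrow> j \<ge> N \<Longrightarrow> L2_norm M (\<lambda>x. w (m + i) x - w (m + j) x) < e"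
    by blast
  have "L2_norm M (\<lambda>x. w i x - w j x) < e" if "i \<ge> m + N" "j \<ge> m + N" for i j
    using N[of "i - m" "j - m"] that by simp
  then show "\<exists>N. \<forall>i\<ge>N. \<forall>j\<ge>N. L2_norm M (\<lambda>x. w i x - w j x) < e" by blast
qed

lemma summable_if_weighted_power2_finite:
  fixes d :: "nat \<Rightarrow> 'b::banach"
  assumes fin: "(\<Sum>k. ennreal (2^k * (norm (d k))\<^sup>2)) \<noteq> \<infinity>"
  shows "summable d"
proof -
  define a where "a k = ennreal (2^k * (norm (d k))\<^sup>2)" for k
  define c where "c = enn2real (suminf a)"
  have bound: "norm (d k) \<le> sqrt c * (inverse (sqrt 2))^k" for k
  proof -
    have "a k \<le> suminf a"
      using sum_le_suminf[of a "{k}"] by (simp add: summableI)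
    moreover have "suminf a < \<top>"
      using fin by (simp add: a_def[abs_def] top.not_eq_extremum)
    ultimately have "enn2real (a k) \<le> c"
      unfolding c_def by (rule enn2real_mono)
    then have "2^k * (norm (d k))\<^sup>2 \<le> c"
      by (simp add: a_def)
    then have "(norm (d k))\<^sup>2 \<le> c / 2^k"
      by (simp add: pos_le_divide_eq mult.commute)
    then have "norm (d k) \<le> sqrt (c / 2^k)"
      by (rule real_le_rsqrt)
    also have "sqrt (c / 2^k) = sqrt c * (inverse (sqrt 2))^k"
      by (simp add: divide_inverse real_sqrt_mult real_sqrt_inverse real_sqrt_power power_inverse)
    finally show ?thesis .
  qed
  have "summable (\<lambda>k. sqrt c * (inverse (sqrt 2::real))^k)"
    by (intro summable_mult summable_geometric) (simp add: inverse_less_1_iff)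
  then show ?thesis
    by (rule summable_comparison_test'[OF _ bound])
qed

lemma AE_convergent_if_L2_fast_Cauchy:
  assumes v: "\<And>k. v k \<in> L2 M"
    and fast: "\<And>k. L2_norm M (\<lambda>x. v (Suc k) x - v k x) \<le> (1/4)^k"
  shows "AE x in M. convergent (\<lambda>k. v k x)"
proof -
  define d where "d k = (\<lambda>x. v (Suc k) x - v k x)" for k
  have d: "d k \<in> L2 M" for k unfolding d_def by (intro L2_diff v)
  have [measurable]: "d k \<in> borel_measurable M" for k using d by (rule L2_borel_measurable)
  \<comment> \<open>The weights \<open>2\<^sup>k\<close> still leave \<open>\<Sum> 2\<^sup>k \<parallel>d\<^sub>k\<parallel>\<^sup>2 \<le> \<Sum> 8\<^sup>-\<^sup>k\<close> finite, and a.e. they force \<open>\<bar>d\<^sub>k x\<bar> = O(2\<^sup>-\<^sup>k\<^sup>/\<^sup>2)\<close>.\<close>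
  have "(\<integral>\<^sup>+x. (\<Sum>k. ennreal (2^k * (cmod (d k x))\<^sup>2)) \<partial>M)
      = (\<Sum>k. ennreal (2^k) * ennreal (L2_norm M (d k) ^ 2))"
    by (subst nn_integral_suminf)
       (auto simp: ennreal_mult nn_integral_cmult nn_integral_square_eq_L2_norm[OF d])
  also have "\<dots> \<le> (\<Sum>k. ennreal ((1/8)^k))"
  proof (intro suminf_le summableI)
    fix k
    have "L2_norm M (d k) ^ 2 \<le> ((1/4)^k)^2"
      using fast[of k] by (intro power_mono) (simp_all add: d_def L2_norm_nonneg)
    then have "2^k * L2_norm M (d k) ^ 2 \<le> 2^k * ((1/4::real)^k)^2"
      by simp
    also have "\<dots> = (1/8)^k"
      by (simp add: power2_eq_square flip: power_mult_distrib)
    finally have "2^k * L2_norm M (d k) ^ 2 \<le> (1/8::real)^k" .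
    then show "ennreal (2^k) * ennreal (L2_norm M (d k) ^ 2) \<le> ennreal ((1/8)^k)"
      by (simp add: ennreal_mult[symmetric])
  qed
  also have "\<dots> = ennreal (\<Sum>k. (1/8)^k)"
    by (rule suminf_ennreal2) auto
  finally have "(\<integral>\<^sup>+x. (\<Sum>k. ennreal (2^k * (cmod (d k x))\<^sup>2)) \<partial>M) \<noteq> \<infinity>"
    by (auto simp: top_unique)
  then have "AE x in M. (\<Sum>k. ennreal (2^k * (cmod (d k x))\<^sup>2)) \<noteq> \<infinity>"
    by (rule nn_integral_PInf_AE[rotated]) measurable
  then show ?thesis
  proof eventually_elim
    case (elim x)
    have summable: "summable (\<lambda>k. d k x)" using elim by (rule summable_if_weighted_power2_finite)
    have telescope: "(\<lambda>n. v 0 x + (\<Sum>k<n. d k x)) = (\<lambda>n. v n x)"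
      by (simp add: d_def sum_lessThan_telescope[of "\<lambda>k. v k x"])
    have "(\<lambda>n. v n x) \<longlonglongrightarrow> v 0 x + (\<Sum>k. d k x)"
      unfolding telescope[symmetric] by (intro tendsto_add tendsto_const summable_LIMSEQ summable)
    then show ?case by (rule convergentI)
  qed
qed

lemma L2_norm_diff_le_if_AE_limit:
  assumes v: "\<And>k. v k \<in> L2 M" and [measurable]: "h \<in> borel_measurable M"
    and lim: "AE x in M. (\<lambda>m. v m x) \<longlonglongrightarrow> h x"
    and bound: "\<And>m. m \<ge> k \<Longrightarrow> L2_norm M (\<lambda>x. v k x - v m x) \<le> c"
  shows "(\<lambda>x. v k x - h x) \<in> L2 M" and "L2_norm M (\<lambda>x. v k x - h x) \<le> c"
proof -
  have [measurable]: "v m \<in> borel_measurable M" for m using v by (rule L2_borel_measurable)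
  have c: "0 \<le> c" using bound[OF order_refl] L2_norm_nonneg[of M "\<lambda>x. v k x - v k x"] by linarith
  have "(\<integral>\<^sup>+x. ennreal ((cmod (v k x - h x))\<^sup>2) \<partial>M)
      = (\<integral>\<^sup>+x. liminf (\<lambda>m. ennreal ((cmod (v k x - v m x))\<^sup>2)) \<partial>M)"
  proof (rule nn_integral_cong_AE)
    show "AE x in M. ennreal ((cmod (v k x - h x))\<^sup>2) = liminf (\<lambda>m. ennreal ((cmod (v k x - v m x))\<^sup>2))"
      using lim
    proof eventually_elim
      case (elim x)
      then have "(\<lambda>m. ennreal ((cmod (v k x - v m x))\<^sup>2)) \<longlonglongrightarrow> ennreal ((cmod (v k x - h x))\<^sup>2)"
        by (intro tendsto_ennrealI tendsto_intros)
      then show ?case by (subst lim_imp_Liminf) auto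
    qed
  qed
  also have "\<dots> \<le> liminf (\<lambda>m. \<integral>\<^sup>+x. ennreal ((cmod (v k x - v m x))\<^sup>2) \<partial>M)"
    by (rule nn_integral_liminf) measurable
  also have "\<dots> \<le> limsup (\<lambda>m. \<integral>\<^sup>+x. ennreal ((cmod (v k x - v m x))\<^sup>2) \<partial>M)"
    by (rule Liminf_le_Limsup) simp
  also have "\<dots> \<le> ennreal (c ^ 2)"
  proof (rule Limsup_bounded[OF eventually_sequentiallyI])
    fix m assume "k \<le> m"
    then have "L2_norm M (\<lambda>x. v k x - v m x) ^ 2 \<le> c ^ 2"
      using bound L2_norm_nonneg[of M] by (intro power_mono) auto
    then show "(\<integral>\<^sup>+x. ennreal ((cmod (v k x - v m x))\<^sup>2) \<partial>M) \<le> ennreal (c ^ 2)"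
      by (simp add: nn_integral_square_eq_L2_norm[OF L2_diff[OF v v]])
  qed
  finally have le: "(\<integral>\<^sup>+x. ennreal ((cmod (v k x - h x))\<^sup>2) \<partial>M) \<le> ennreal (c ^ 2)" .
  show L2: "(\<lambda>x. v k x - h x) \<in> L2 M"
  proof -
    have "(\<integral>\<^sup>+x. ennreal (norm ((cmod (v k x - h x))\<^sup>2)) \<partial>M) < \<infinity>"
      using order.strict_trans1[OF le ennreal_less_top] by simp
    then show ?thesis by (simp add: L2_def integrableI_bounded)
  qed
  show "L2_norm M (\<lambda>x. v k x - h x) \<le> c"
    using le c by (rule_tac power2_le_imp_le) (simp_all add: nn_integral_square_eq_L2_norm[OF L2])
qed

lemma L2_Cauchy_fast_subseq:
  assumes Cauchy: "L2_Cauchy M w"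
  obtains r where "strict_mono r"
    and "\<And>k m. k \<le> m \<Longrightarrow> L2_norm M (\<lambda>x. w (r k) x - w (r m) x) < (1/4)^k"
proof -
  have "\<forall>k. \<exists>N. \<forall>i\<ge>N. \<forall>j\<ge>N. L2_norm M (\<lambda>x. w i x - w j x) < (1/4::real)^k"
  proof
    fix k :: nat
    have "(1/4::real)^k > 0" by simp
    with Cauchy show "\<exists>N. \<forall>i\<ge>N. \<forall>j\<ge>N. L2_norm M (\<lambda>x. w i x - w j x) < (1/4)^k"
      unfolding L2_Cauchy_def by blast
  qed
  then obtain N where "\<forall>k. \<forall>i\<ge>N k. \<forall>j\<ge>N k. L2_norm M (\<lambda>x. w i x - w j x) < (1/4::real)^k"
    by (rule choice[THEN exE])
  then have N: "\<And>k i j. i \<ge> N k \<Longrightarrow> j \<ge> N k \<Longrightarrow> L2_norm M (\<lambda>x. w i x - w j x) < (1/4)^k"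
    by blast
  define r where "r = rec_nat (N 0) (\<lambda>k rk. max (Suc rk) (N (Suc k)))"
  have r_Suc: "r (Suc k) = max (Suc (r k)) (N (Suc k))" for k
    by (simp add: r_def)
  have "strict_mono r" by (rule strict_monoI_Suc) (simp add: r_Suc)
  have N_le_r: "N k \<le> r m" if "k \<le> m" for k m
  proof -
    have "N k \<le> r k" by (cases k) (simp_all add: r_def)
    moreover have "r k \<le> r m" using strict_mono_less_eq[OF \<open>strict_mono r\<close>] that by simp
    ultimately show ?thesis by linarith
  qed
  show ?thesis
    using that[OF \<open>strict_mono r\<close>] N[OF N_le_r N_le_r] by blast
qed

lemma L2_convergent_if_Cauchy_subseq_convergent:
  assumes w: "\<And>i. w i \<in> L2 M" and h: "h \<in> L2 M" and Cauchy: "L2_Cauchy M w"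
    and r: "strict_mono r" and lim: "(\<lambda>k. L2_norm M (\<lambda>x. w (r k) x - h x)) \<longlonglongrightarrow> 0"
  shows "(\<lambda>n. L2_norm M (\<lambda>x. w n x - h x)) \<longlonglongrightarrow> 0"
proof (rule LIMSEQ_I)
  fix e :: real assume "0 < e"
  then have "e/2 > 0" by simp
  then obtain N where N: "\<And>i j. i \<ge> N \<Longrightarrow> j \<ge> N \<Longrightarrow> L2_norm M (\<lambda>x. w i x - w j x) < e/2"
    using Cauchy unfolding L2_Cauchy_def by blast
  from order_tendstoD(2)[OF lim \<open>e/2 > 0\<close>] obtain K
    where K: "\<And>k. k \<ge> K \<Longrightarrow> L2_norm M (\<lambda>x. w (r k) x - h x) < e/2"
    unfolding eventually_sequentially by blast
  define k where "k = max N K"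
  have "N \<le> r k" using seq_suble[OF r, of k] by (simp add: k_def)
  have "L2_norm M (\<lambda>x. w n x - h x) < e" if "n \<ge> N" for n
  proof -
    have "L2_norm M (\<lambda>x. w n x - h x) \<le> L2_norm M (\<lambda>x. w n x - w (r k) x) + L2_norm M (\<lambda>x. w (r k) x - h x)"
      by (rule L2_norm_triangle_diff[OF w w h])
    also have "\<dots> < e/2 + e/2"
      using N[OF that \<open>N \<le> r k\<close>] K[of k] by (intro add_strict_mono) (simp_all add: k_def)
    finally show ?thesis by simp
  qed
  then show "\<exists>N. \<forall>n\<ge>N. norm (L2_norm M (\<lambda>x. w n x - h x) - 0) < e"
    using L2_norm_nonneg[of M] by (intro exI[of _ N]) auto
qed

lemma L2_Cauchy_convergent:
  assumes w: "\<And>i. w i \<in> L2 M" and Cauchy: "L2_Cauchy M w"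
  obtains h where "h \<in> L2 M" and "(\<lambda>n. L2_norm M (\<lambda>x. w n x - h x)) \<longlonglongrightarrow> 0"
proof -
  obtain r where r: "strict_mono r"
    and close: "\<And>k m. k \<le> m \<Longrightarrow> L2_norm M (\<lambda>x. w (r k) x - w (r m) x) < (1/4)^k"
    using L2_Cauchy_fast_subseq[OF Cauchy] by blast
  define v where "v k = w (r k)" for k
  have v: "v k \<in> L2 M" for k by (simp add: v_def w)
  have v_close: "L2_norm M (\<lambda>x. v k x - v m x) \<le> (1/4)^k" if "k \<le> m" for k m
    using close[OF that] by (simp add: v_def)
  have "AE x in M. convergent (\<lambda>k. v k x)"
    using v by (rule AE_convergent_if_L2_fast_Cauchy) (simp add: L2_norm_minus_commute v_close)
  define h where "h x = lim (\<lambda>k. v k x)" for x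
  have lim: "AE x in M. (\<lambda>k. v k x) \<longlonglongrightarrow> h x"
    using \<open>AE x in M. convergent (\<lambda>k. v k x)\<close>
    by eventually_elim (simp add: h_def convergent_LIMSEQ_iff)
  have [measurable]: "v k \<in> borel_measurable M" for k using v by (rule L2_borel_measurable)
  have h_measurable: "h \<in> borel_measurable M" unfolding h_def by measurable
  note v_h = L2_norm_diff_le_if_AE_limit[OF v h_measurable lim v_close]
  have h: "h \<in> L2 M" using L2_diff[OF v v_h(1), of 0 0] by simp
  have "(\<lambda>k. L2_norm M (\<lambda>x. w (r k) x - h x)) \<longlonglongrightarrow> 0"
    using v_h(2) L2_norm_nonneg[of M]
    by (intro tendsto_sandwich[OF _ _ tendsto_const LIMSEQ_power_zero[of "1/4::real"]])
       (simp_all add: v_def)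
  with h that show ?thesis
    using L2_convergent_if_Cauchy_subseq_convergent[OF w h Cauchy r] by blast
qed

section \<open>Almost periodic functions\<close>

lemma almost_periodicI:
  assumes f: "f \<in> L2 M"
    and subseq: "\<And>g. (\<And>n::nat. g n \<in> S) \<Longrightarrow> \<exists>r h. strict_mono r \<and> h \<in> L2 M \<and>
                   (\<lambda>n. L2_norm M (\<lambda>x. f (T (g (r n)) x) - h x)) \<longlonglongrightarrow> 0"
  shows "almost_periodic M T S f"
  unfolding almost_periodic_def L2_precompact_def
proof (intro conjI allI impI f)
  fix u :: "nat \<Rightarrow> _" assume "\<forall>n. u n \<in> (\<lambda>g. f \<circ> T g) ` S"
  then have "\<forall>n. \<exists>g. g \<in> S \<and> u n = f \<circ> T g" by blast
  then obtain g where "\<forall>n. g n \<in> S \<and> u n = f \<circ> T (g n)"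
    by (rule choice[THEN exE])
  then have g: "\<And>n. g n \<in> S" and u: "\<And>n. u n = f \<circ> T (g n)" by simp_all
  obtain r h where r: "strict_mono r" and h: "h \<in> L2 M"
    and lim: "(\<lambda>n. L2_norm M (\<lambda>x. f (T (g (r n)) x) - h x)) \<longlonglongrightarrow> 0"
    using subseq[of g, OF g] by blast
  show "\<exists>r h. strict_mono r \<and> h \<in> L2 M \<and> (\<lambda>n. L2_norm M (\<lambda>x. u (r n) x - h x)) \<longlonglongrightarrow> 0"
    by (intro exI[of _ r] exI[of _ h] conjI r h) (simp add: u lim)
qed

lemma almost_periodicD:
  assumes "almost_periodic M T S f" and "\<And>n::nat. g n \<in> S"
  obtains r h where "strict_mono r" "h \<in> L2 M"
    "(\<lambda>n. L2_norm M (\<lambda>x. f (T (g (r n)) x) - h x)) \<longlonglongrightarrow> 0"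
proof -
  have "L2_precompact M ((\<lambda>g. f \<circ> T g) ` S)"
    using assms(1) by (simp add: almost_periodic_def)
  moreover have "\<forall>n. f \<circ> T (g n) \<in> (\<lambda>g. f \<circ> T g) ` S"
    using assms(2) by blast
  ultimately have "\<exists>r h. strict_mono r \<and> h \<in> L2 M \<and>
      (\<lambda>n. L2_norm M (\<lambda>x. (f \<circ> T (g (r n))) x - h x)) \<longlonglongrightarrow> 0"
    unfolding L2_precompact_def by (rule spec[of _ "\<lambda>n. f \<circ> T (g n)", THEN mp])
  then obtain r h where "strict_mono r" "h \<in> L2 M"
    and "(\<lambda>n. L2_norm M (\<lambda>x. (f \<circ> T (g (r n))) x - h x)) \<longlonglongrightarrow> 0"
    by blast
  then show ?thesis using that[of r h] by (simp add: o_def)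
qed

lemma almost_periodic_L2: "almost_periodic M T S f \<Longrightarrow> f \<in> L2 M"
  by (simp add: almost_periodic_def)

lemma almost_periodic_zero:
  fixes M :: "'a measure"
  shows "almost_periodic M T S (\<lambda>x. 0)"
  unfolding almost_periodic_def L2_precompact_def
proof (intro conjI allI impI)
  show z: "(\<lambda>x. 0) \<in> L2 M" by (simp add: L2_def)
  fix u :: "nat \<Rightarrow> 'a \<Rightarrow> complex" assume "\<forall>n. u n \<in> (\<lambda>g. (\<lambda>x. 0) \<circ> T g) ` S"
  then have "u n = (\<lambda>x. 0)" for n by (auto simp: o_def)
  then show "\<exists>r h. strict_mono r \<and> h \<in> L2 M \<and> (\<lambda>n. L2_norm M (\<lambda>x. u (r n) x - h x)) \<longlonglongrightarrow> 0"
    using z by (intro exI[of _ "id :: nat \<Rightarrow> nat"] exI[of _ "\<lambda>x::'a. 0::complex"]) (simp add: strict_mono_def L2_norm_def)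
qed

lemma almost_periodic_mult:
  assumes f: "almost_periodic M T S f"
  shows "almost_periodic M T S (\<lambda>x. c * f x)"
proof (rule almost_periodicI)
  show "(\<lambda>x. c * f x) \<in> L2 M" using f by (intro L2_mult almost_periodic_L2)
  fix g :: "nat \<Rightarrow> _" assume g: "\<And>n. g n \<in> S"
  obtain r h where r: "strict_mono r" and h: "h \<in> L2 M"
    and lim: "(\<lambda>n. L2_norm M (\<lambda>x. f (T (g (r n)) x) - h x)) \<longlonglongrightarrow> 0"
    using almost_periodicD[where g=g, OF f g] by blast
  have "L2_norm M (\<lambda>x. c * f (T (g (r n)) x) - c * h x)
      = cmod c * L2_norm M (\<lambda>x. f (T (g (r n)) x) - h x)" for n
    using L2_norm_mult[of M c "\<lambda>x. f (T (g (r n)) x) - h x"] by (simp add: right_diff_distrib)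
  then have lim_c: "(\<lambda>n. L2_norm M (\<lambda>x. c * f (T (g (r n)) x) - c * h x)) \<longlonglongrightarrow> 0"
    using tendsto_mult_right_zero[OF lim, of "cmod c"] by simp
  show "\<exists>r h. strict_mono r \<and> h \<in> L2 M \<and>
      (\<lambda>n. L2_norm M (\<lambda>x. c * f (T (g (r n)) x) - h x)) \<longlonglongrightarrow> 0"
    by (intro exI[of _ r] exI[of _ "\<lambda>x. c * h x"] conjI r L2_mult h lim_c)
qed

locale measure_preserving_family =
  fixes M :: "'a measure" and T :: "'g \<Rightarrow> 'a \<Rightarrow> 'a" and S :: "'g set"
  assumes measurable_T: "g \<in> S \<Longrightarrow> T g \<in> M \<rightarrow>\<^sub>M M"
    and distr_T: "g \<in> S \<Longrightarrow> distr M M (T g) = M"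
begin

lemma L2_comp_T: "g \<in> S \<Longrightarrow> f \<in> L2 M \<Longrightarrow> (\<lambda>x. f (T g x)) \<in> L2 M"
  by (rule L2_comp_measure_preserving(1)[OF measurable_T distr_T])

lemma L2_norm_comp_T_diff:
  assumes "g \<in> S" "f \<in> L2 M" "h \<in> L2 M"
  shows "L2_norm M (\<lambda>x. f (T g x) - h (T g x)) = L2_norm M (\<lambda>x. f x - h x)"
  using L2_comp_measure_preserving(2)[OF measurable_T distr_T L2_diff] assms by simp

lemma almost_periodic_add:
  assumes f: "almost_periodic M T S f" and h: "almost_periodic M T S h"
  shows "almost_periodic M T S (\<lambda>x. f x + h x)"
proof (rule almost_periodicI)
  show "(\<lambda>x. f x + h x) \<in> L2 M" using f h by (intro L2_add almost_periodic_L2)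
  fix g :: "nat \<Rightarrow> _" assume g: "\<And>n. g n \<in> S"
  obtain r1 a where r1: "strict_mono r1" and a: "a \<in> L2 M"
    and lim_a: "(\<lambda>n. L2_norm M (\<lambda>x. f (T (g (r1 n)) x) - a x)) \<longlonglongrightarrow> 0"
    using almost_periodicD[where g=g, OF f g] by blast
  obtain r2 b where r2: "strict_mono r2" and b: "b \<in> L2 M"
    and lim_b: "(\<lambda>n. L2_norm M (\<lambda>x. h (T (g (r1 (r2 n))) x) - b x)) \<longlonglongrightarrow> 0"
    using almost_periodicD[where g="\<lambda>n. g (r1 n)", OF h g] by blast
  have lim_a': "(\<lambda>n. L2_norm M (\<lambda>x. f (T (g (r1 (r2 n))) x) - a x)) \<longlonglongrightarrow> 0"
    using LIMSEQ_subseq_LIMSEQ[OF lim_a r2] by (simp add: o_def)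
  have "L2_norm M (\<lambda>x. f (T (g (r1 (r2 n))) x) + h (T (g (r1 (r2 n))) x) - (a x + b x))
      \<le> L2_norm M (\<lambda>x. f (T (g (r1 (r2 n))) x) - a x) + L2_norm M (\<lambda>x. h (T (g (r1 (r2 n))) x) - b x)"
    for n
    using L2_norm_triangle[OF L2_diff L2_diff, OF L2_comp_T[OF g] a L2_comp_T[OF g] b]
      almost_periodic_L2[OF f] almost_periodic_L2[OF h]
    by (simp add: algebra_simps)
  then have lim: "(\<lambda>n. L2_norm M (\<lambda>x. f (T (g (r1 (r2 n))) x) + h (T (g (r1 (r2 n))) x) - (a x + b x)))
      \<longlonglongrightarrow> 0"
    by (intro tendsto_sandwich[OF _ _ tendsto_const tendsto_add_zero[OF lim_a' lim_b]])
       (simp_all add: L2_norm_nonneg)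
  show "\<exists>r c. strict_mono r \<and> c \<in> L2 M \<and>
      (\<lambda>n. L2_norm M (\<lambda>x. f (T (g (r n)) x) + h (T (g (r n)) x) - c x)) \<longlonglongrightarrow> 0"
    by (intro exI[of _ "r1 \<circ> r2"] exI[of _ "\<lambda>x. a x + b x"] conjI strict_mono_o r1 r2 L2_add a b)
       (simp add: lim)
qed

lemma almost_periodic_diagonal_Cauchy:
  fixes u :: "nat \<Rightarrow> 'a \<Rightarrow> complex"
  assumes u: "\<And>k. almost_periodic M T S (u k)" and g: "\<And>n::nat. g n \<in> S"
  obtains D where "strict_mono D" and "\<And>k. L2_Cauchy M (\<lambda>i x. u k (T (g (D i)) x))"
proof -
  define P where "P k s \<longleftrightarrow> (\<exists>h\<in>L2 M. (\<lambda>i. L2_norm M (\<lambda>x. u k (T (g (s i)) x) - h x)) \<longlonglongrightarrow> 0)"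
    for k and s :: "nat \<Rightarrow> nat"
  interpret subseqs P
  proof
    fix k and s :: "nat \<Rightarrow> nat"
    obtain r h where r: "strict_mono r" and "h \<in> L2 M"
      "(\<lambda>n. L2_norm M (\<lambda>x. u k (T (g (s (r n))) x) - h x)) \<longlonglongrightarrow> 0"
      using almost_periodicD[where g="\<lambda>n. g (s n)", OF u g] by blast
    then have "P k (s \<circ> r)" unfolding P_def o_def by blast
    with r show "\<exists>r. strict_mono r \<and> P k (s \<circ> r)" by blast
  qed
  have P_subseq: "P k (s \<circ> r)" if r: "strict_mono r" and "P k s" for k r s
  proof -
    obtain h where "h \<in> L2 M" and lim: "(\<lambda>i. L2_norm M (\<lambda>x. u k (T (g (s i)) x) - h x)) \<longlonglongrightarrow> 0"
      using \<open>P k s\<close> unfolding P_def by blast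
    then show ?thesis using LIMSEQ_subseq_LIMSEQ[OF lim r] unfolding P_def o_def by blast
  qed
  have "L2_Cauchy M (\<lambda>i x. u k (T (g (diagseq i)) x))" for k
  proof (rule L2_Cauchy_shift)
    obtain h where "h \<in> L2 M"
      "(\<lambda>i. L2_norm M (\<lambda>x. u k (T (g (diagseq (Suc k + i))) x) - h x)) \<longlonglongrightarrow> 0"
      using diagseq_holds[OF P_subseq, of k] unfolding P_def o_def by blast
    moreover have "(\<lambda>x. u k (T (g (diagseq (Suc k + i))) x)) \<in> L2 M" for i
      using g almost_periodic_L2[OF u] by (rule L2_comp_T)
    ultimately show "L2_Cauchy M (\<lambda>i x. u k (T (g (diagseq (Suc k + i))) x))"
      by (intro L2_Cauchy_if_convergent)
  qed
  with subseq_diagseq that show ?thesis by blast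
qed

lemma L2_Cauchy_comp_T_if_L2_limit:
  assumes u: "\<And>k. u k \<in> L2 M" and f: "f \<in> L2 M" and g: "\<And>i. g i \<in> S"
    and Cauchy_u: "\<And>k. L2_Cauchy M (\<lambda>i x. u k (T (g i) x))"
    and lim: "(\<lambda>k. L2_norm M (\<lambda>x. u k x - f x)) \<longlonglongrightarrow> 0"
  shows "L2_Cauchy M (\<lambda>i x. f (T (g i) x))"
  unfolding L2_Cauchy_def
proof (intro allI impI)
  fix e :: real assume "e > 0"
  then have "e/3 > 0" by simp
  from order_tendstoD(2)[OF lim this] obtain k where k: "L2_norm M (\<lambda>x. u k x - f x) < e/3"
    unfolding eventually_sequentially by blast
  define F where "F i x = f (T (g i) x)" for i x
  define U where "U i x = u k (T (g i) x)" for i x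
  have F: "F i \<in> L2 M" and U: "U i \<in> L2 M" for i
    unfolding F_def U_def using g f u by (simp_all add: L2_comp_T)
  have FU: "L2_norm M (\<lambda>x. F i x - U i x) < e/3" for i
    using L2_norm_comp_T_diff[OF g f u] k L2_norm_minus_commute[of M f "u k"] by (simp add: F_def U_def)
  have UF: "L2_norm M (\<lambda>x. U i x - F i x) < e/3" for i
    using FU[of i] L2_norm_minus_commute[of M "F i" "U i"] by simp
  from \<open>e/3 > 0\<close> obtain N where N: "\<And>i j. i \<ge> N \<Longrightarrow> j \<ge> N \<Longrightarrow> L2_norm M (\<lambda>x. U i x - U j x) < e/3"
    using Cauchy_u[of k] unfolding L2_Cauchy_def U_def by blast
  have "L2_norm M (\<lambda>x. F i x - F j x) < e" if "i \<ge> N" "j \<ge> N" for i j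
  proof -
    have "L2_norm M (\<lambda>x. F i x - F j x) \<le> L2_norm M (\<lambda>x. F i x - U i x) + L2_norm M (\<lambda>x. U i x - F j x)"
      by (rule L2_norm_triangle_diff[OF F U F])
    also have "\<dots> \<le> L2_norm M (\<lambda>x. F i x - U i x)
        + (L2_norm M (\<lambda>x. U i x - U j x) + L2_norm M (\<lambda>x. U j x - F j x))"
      by (intro add_left_mono L2_norm_triangle_diff[OF U U F])
    also have "\<dots> < e/3 + (e/3 + e/3)"
      using FU[of i] N[OF that] UF[of j] by (intro add_strict_mono)
    finally show ?thesis by simp
  qed
  then show "\<exists>N. \<forall>i\<ge>N. \<forall>j\<ge>N. L2_norm M (\<lambda>x. f (T (g i) x) - f (T (g j) x)) < e"
    unfolding F_def by blast
qed

lemma almost_periodic_L2_limit: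
  assumes u: "\<And>n. almost_periodic M T S (u n)" and f: "f \<in> L2 M"
    and lim: "(\<lambda>n. L2_norm M (\<lambda>x. u n x - f x)) \<longlonglongrightarrow> 0"
  shows "almost_periodic M T S f"
proof (rule almost_periodicI[OF f])
  fix g :: "nat \<Rightarrow> _" assume g: "\<And>n. g n \<in> S"
  obtain D where D: "strict_mono D" and Cauchy_u: "\<And>k. L2_Cauchy M (\<lambda>i x. u k (T (g (D i)) x))"
    using almost_periodic_diagonal_Cauchy[where u=u and g=g, OF u g] by blast
  have "L2_Cauchy M (\<lambda>i x. f (T (g (D i)) x))"
    using almost_periodic_L2[OF u] f g Cauchy_u lim by (rule L2_Cauchy_comp_T_if_L2_limit)
  moreover have "(\<lambda>x. f (T (g (D i)) x)) \<in> L2 M" for i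
    using g f by (rule L2_comp_T)
  ultimately obtain h where "h \<in> L2 M" "(\<lambda>n. L2_norm M (\<lambda>x. f (T (g (D n)) x) - h x)) \<longlonglongrightarrow> 0"
    using L2_Cauchy_convergent[of "\<lambda>i x. f (T (g (D i)) x)" M] by blast
  with D show "\<exists>r h. strict_mono r \<and> h \<in> L2 M \<and> (\<lambda>n. L2_norm M (\<lambda>x. f (T (g (r n)) x) - h x)) \<longlonglongrightarrow> 0"
    by blast
qed

end

section \<open>Entropy of simple functions\<close>

text \<open>Shannon entropy (in nats) of the distribution of \<open>X\<close>, written out so that it needs no
  distribution witness; for simple functions it is the library's \<open>entropy\<close>.\<close>

definition simple_entropy :: "'a measure \<Rightarrow> ('a \<Rightarrow> 'c) \<Rightarrow> real" where
  "simple_entropy M X =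
     - (\<Sum>v\<in>X ` space M. measure M (X -` {v} \<inter> space M) * ln (measure M (X -` {v} \<inter> space M)))"

lemma simple_entropy_cong:
  assumes "\<And>x. x \<in> space M \<Longrightarrow> X x = Y x"
  shows "simple_entropy M X = simple_entropy M Y"
proof -
  have "X ` space M = Y ` space M" and "\<And>v. X -` {v} \<inter> space M = Y -` {v} \<inter> space M"
    using assms by (auto simp: image_def)
  then show ?thesis by (simp add: simple_entropy_def)
qed

lemma simple_entropy_superset:
  assumes "finite W" "X ` space M \<subseteq> W"
  shows "simple_entropy M X =
    - (\<Sum>v\<in>W. measure M (X -` {v} \<inter> space M) * ln (measure M (X -` {v} \<inter> space M)))"
  unfolding simple_entropy_def
proof (intro arg_cong[where f=uminus] sum.mono_neutral_left)
  show "\<forall>v\<in>W - X ` space M. measure M (X -` {v} \<inter> space M) * ln (measure M (X -` {v} \<inter> space M)) = 0"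
  proof
    fix v assume "v \<in> W - X ` space M"
    then have "X -` {v} \<inter> space M = {}" by auto
    then show "measure M (X -` {v} \<inter> space M) * ln (measure M (X -` {v} \<inter> space M)) = 0" by simp
  qed
qed (use assms in auto)

lemma part_entropy_fibres:
  assumes "finite W" "X ` space M \<subseteq> W"
  shows "part_entropy M ((\<lambda>v. X -` {v} \<inter> space M) ` W) = simple_entropy M X"
proof -
  have "(\<Sum>B\<in>(\<lambda>v. X -` {v} \<inter> space M) ` W. measure M B * ln (measure M B))
      = (\<Sum>v\<in>W. measure M (X -` {v} \<inter> space M) * ln (measure M (X -` {v} \<inter> space M)))"
  proof (subst sum.reindex_nontrivial[OF assms(1)])
    fix v w assume "v \<in> W" "w \<in> W" "v \<noteq> w" "X -` {v} \<inter> space M = X -` {w} \<inter> space M"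
    then have "X -` {v} \<inter> space M = {}" by blast
    then show "measure M (X -` {v} \<inter> space M) * ln (measure M (X -` {v} \<inter> space M)) = 0" by simp
  qed (simp add: o_def)
  then show ?thesis by (simp add: part_entropy_def simple_entropy_superset[OF assms])
qed

lemma simple_entropy_comp_measure_preserving:
  assumes T: "T \<in> M \<rightarrow>\<^sub>M M" "distr M M T = M" and X: "simple_function M X"
  shows "simple_entropy M (\<lambda>x. X (T x)) = simple_entropy M X"
proof -
  have fibre: "measure M ((\<lambda>x. X (T x)) -` {v} \<inter> space M) = measure M (X -` {v} \<inter> space M)"
    if "v \<in> X ` space M" for v
  proof -
    have "(\<lambda>x. X (T x)) -` {v} \<inter> space M = T -` (X -` {v} \<inter> space M) \<inter> space M"
      using measurable_space[OF T(1)] by auto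
    then show ?thesis
      using measure_distr[OF T(1), of "X -` {v} \<inter> space M"] simple_functionD(2)[OF X] that T(2)
      by (auto simp: image_iff)
  qed
  have "(\<lambda>x. X (T x)) ` space M \<subseteq> X ` space M" using measurable_space[OF T(1)] by auto
  then have "simple_entropy M (\<lambda>x. X (T x)) = - (\<Sum>v\<in>X ` space M.
      measure M ((\<lambda>x. X (T x)) -` {v} \<inter> space M) * ln (measure M ((\<lambda>x. X (T x)) -` {v} \<inter> space M)))"
    using simple_functionD(1)[OF X] by (rule_tac simple_entropy_superset) simp_all
  also have "\<dots> = simple_entropy M X"
    by (simp add: simple_entropy_def fibre cong: sum.cong_simp)
  finally show ?thesis .
qed

context prob_space
begin

lemma simple_entropy_eq_entropy:
  assumes X: "simple_function M X"
  shows "simple_entropy M X = entropy (exp 1) (count_space (X ` space M)) X"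
proof -
  interpret information_space M "exp 1" by standard simp
  show ?thesis
    using entropy_simple_distributed[OF simple_distributedI[OF X measure_nonneg refl]]
    by (simp add: simple_entropy_def log_ln[symmetric])
qed

lemma simple_entropy_Pair_le:
  assumes X: "simple_function M X" and Y: "simple_function M Y"
  shows "simple_entropy M (\<lambda>x. (X x, Y x)) \<le> simple_entropy M X + simple_entropy M Y"
proof -
  interpret information_space M "exp 1" by standard simp
  show ?thesis
    using simple_entropy_eq_entropy[OF simple_function_Pair[OF X Y]] entropy_chain_rule[OF X Y]
      conditional_entropy_less_eq_entropy[OF Y X] simple_entropy_eq_entropy[OF X]
      simple_entropy_eq_entropy[OF Y]
    by simp
qed

lemma simple_entropy_comp_le:
  assumes X: "simple_function M X"
  shows "simple_entropy M (f \<circ> X) \<le> simple_entropy M X"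
proof -
  interpret information_space M "exp 1" by standard simp
  show ?thesis
    using entropy_data_processing[OF X, of f] simple_entropy_eq_entropy[OF X]
      simple_entropy_eq_entropy[OF simple_function_compose[OF X, of f]]
    by simp
qed

lemma simple_entropy_nonneg: "0 \<le> simple_entropy M X"
proof -
  have "measure M A * ln (measure M A) \<le> 0" for A
  proof (cases "measure M A = 0")
    case False
    then have "0 < measure M A" using measure_nonneg[of M A] by linarith
    then have "ln (measure M A) \<le> 0" using prob_le_1[of A] by simp
    then show ?thesis using measure_nonneg[of M A] by (simp add: mult_nonneg_nonpos)
  qed simp
  then show ?thesis unfolding simple_entropy_def by (simp add: sum_nonpos)
qed

lemma simple_entropy_const: "simple_entropy M (\<lambda>x. c) = 0"
proof -
  have "(\<lambda>x. c) ` space M \<subseteq> {c}" by blast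
  then show ?thesis using simple_entropy_superset[of "{c}" "\<lambda>x. c" M] by (simp add: prob_space)
qed

lemma simple_entropy_indicator:
  assumes "A \<in> events"
  shows "simple_entropy M (\<lambda>x. x \<in> A) = - (prob A * ln (prob A) + (1 - prob A) * ln (1 - prob A))"
proof -
  have "(\<lambda>x. x \<in> A) -` {True} \<inter> space M = A" "(\<lambda>x. x \<in> A) -` {False} \<inter> space M = space M - A"
    using sets.sets_into_space[OF assms] by auto
  moreover have "simple_entropy M (\<lambda>x. x \<in> A) = - (\<Sum>v\<in>{True, False}.
      prob ((\<lambda>x. x \<in> A) -` {v} \<inter> space M) * ln (prob ((\<lambda>x. x \<in> A) -` {v} \<inter> space M)))"
    by (rule simple_entropy_superset) auto
  ultimately show ?thesis by (simp add: prob_compl assms)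
qed

end

lemma binary_entropy_tendsto_0:
  fixes p :: "nat \<Rightarrow> real"
  assumes "p \<longlonglongrightarrow> 0" "\<And>n. 0 \<le> p n"
  shows "(\<lambda>n. - (p n * ln (p n) + (1 - p n) * ln (1 - p n))) \<longlonglongrightarrow> 0"
proof -
  have "((\<lambda>t::real. - (t * ln t + (1 - t) * ln (1 - t))) \<longlongrightarrow> 0) (at_right 0)"
    by real_asymp
  then have "continuous (at 0 within {0..}) (\<lambda>t::real. - (t * ln t + (1 - t) * ln (1 - t)))"
    by (simp add: continuous_within at_within_Ici_at_right)
  from continuous_within_tendsto_compose'[OF this _ assms(1)] assms(2) show ?thesis by simp
qed

section \<open>Itineraries\<close>

definition itinerary :: "('g \<Rightarrow> 'a \<Rightarrow> 'a) \<Rightarrow> 'a set \<Rightarrow> 'g list \<Rightarrow> 'a \<Rightarrow> bool list" where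
  "itinerary T A gs x = map (\<lambda>g. T g x \<in> A) gs"

lemma itinerary_Nil [simp]: "itinerary T A [] = (\<lambda>x. [])"
  by (simp add: itinerary_def fun_eq_iff)

lemma itinerary_Cons: "itinerary T A (g # gs) x = (T g x \<in> A) # itinerary T A gs x"
  by (simp add: itinerary_def)

lemma length_itinerary [simp]: "length (itinerary T A gs x) = length gs"
  by (simp add: itinerary_def)

lemma itinerary_Cons_eq_comp:
  "itinerary T A (g # gs) = (\<lambda>(b, l). b # l) \<circ> (\<lambda>x. (T g x \<in> A, itinerary T A gs x))"
  by (simp add: fun_eq_iff itinerary_Cons)

lemma itinerary_Un_eq_comp:
  "itinerary T (B \<union> D) gs =
     (\<lambda>(l1, l2). map (\<lambda>(a, b). a \<or> b) (zip l1 l2)) \<circ> (\<lambda>x. (itinerary T B gs x, itinerary T D gs x))"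
proof
  fix x
  show "itinerary T (B \<union> D) gs x = ((\<lambda>(l1, l2). map (\<lambda>(a, b). a \<or> b) (zip l1 l2))
      \<circ> (\<lambda>x. (itinerary T B gs x, itinerary T D gs x))) x"
    by (induction gs) (auto simp: itinerary_Cons)
qed

lemma simple_function_mem: "A \<in> sets M \<Longrightarrow> simple_function M (\<lambda>x. x \<in> A)"
  by (simp add: simple_function_eq_measurable)

locale prob_measure_preserving_family = prob_space M + measure_preserving_family M T S
  for M :: "'a measure" and T :: "'g \<Rightarrow> 'a \<Rightarrow> 'a" and S :: "'g set"
begin

lemma simple_function_mem_T:
  "g \<in> S \<Longrightarrow> A \<in> sets M \<Longrightarrow> simple_function M (\<lambda>x. T g x \<in> A)"
  using simple_function_comp[OF measurable_T simple_function_mem] .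

lemma simple_function_itinerary:
  assumes "set gs \<subseteq> S" "A \<in> sets M"
  shows "simple_function M (itinerary T A gs)"
  using assms(1)
proof (induction gs)
  case (Cons g gs)
  then show ?case
    unfolding itinerary_Cons_eq_comp
    by (intro simple_function_compose simple_function_Pair simple_function_mem_T assms(2)) auto
qed simp

lemma simple_entropy_itinerary_le:
  assumes "set gs \<subseteq> S" "A \<in> sets M"
  shows "simple_entropy M (itinerary T A gs) \<le> real (length gs) * simple_entropy M (\<lambda>x. x \<in> A)"
  using assms(1)
proof (induction gs)
  case Nil
  then show ?case by (simp add: simple_entropy_const)
next
  case (Cons g gs)
  then have g: "g \<in> S" and gs: "set gs \<subseteq> S" by simp_all
  have "simple_entropy M (itinerary T A (g # gs))
      \<le> simple_entropy M (\<lambda>x. (T g x \<in> A, itinerary T A gs x))"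
    unfolding itinerary_Cons_eq_comp
    by (intro simple_entropy_comp_le simple_function_Pair simple_function_mem_T
        simple_function_itinerary g gs assms(2))
  also have "\<dots> \<le> simple_entropy M (\<lambda>x. T g x \<in> A) + simple_entropy M (itinerary T A gs)"
    by (intro simple_entropy_Pair_le simple_function_mem_T simple_function_itinerary g gs assms(2))
  also have "simple_entropy M (\<lambda>x. T g x \<in> A) = simple_entropy M (\<lambda>x. x \<in> A)"
    using simple_entropy_comp_measure_preserving[OF measurable_T[OF g] distr_T[OF g]
        simple_function_mem[OF assms(2)]] .
  finally show ?case using Cons.IH[OF gs] by (simp add: algebra_simps)
qed

lemma simple_entropy_itinerary_Un_le:
  assumes "set gs \<subseteq> S" "B \<in> sets M" "D \<in> sets M"
  shows "simple_entropy M (itinerary T (B \<union> D) gs)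
    \<le> simple_entropy M (itinerary T B gs) + simple_entropy M (itinerary T D gs)"
proof -
  have "simple_entropy M (itinerary T (B \<union> D) gs)
      \<le> simple_entropy M (\<lambda>x. (itinerary T B gs x, itinerary T D gs x))"
    unfolding itinerary_Un_eq_comp
    by (intro simple_entropy_comp_le simple_function_Pair simple_function_itinerary assms)
  also have "\<dots> \<le> simple_entropy M (itinerary T B gs) + simple_entropy M (itinerary T D gs)"
    by (intro simple_entropy_Pair_le simple_function_itinerary assms)
  finally show ?thesis .
qed

lemma join_pull_part_eq_itinerary_fibres:
  assumes "set gs \<subseteq> S"
  shows "join_list M (map (\<lambda>g. pull_part M T g {A, space M - A}) gs) =
    (\<lambda>v. itinerary T A gs -` {v} \<inter> space M) ` {v. length v = length gs}"
  using assms
proof (induction gs)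
  case Nil
  have "{v :: bool list. length v = 0} = {[]}" by auto
  then show ?case by simp
next
  case (Cons g gs)
  define E where "E b = {x \<in> space M. (T g x \<in> A) = b}" for b
  define F where "F v = itinerary T A gs -` {v} \<inter> space M" for v
  have pull: "pull_part M T g {A, space M - A} = {E True, E False}"
    unfolding pull_part_def E_def using measurable_space[OF measurable_T] Cons.prems by auto
  have EF: "E b \<inter> F v = itinerary T A (g # gs) -` {b # v} \<inter> space M" for b v
    unfolding E_def F_def by (auto simp: itinerary_Cons)
  have "join_part {E True, E False} (F ` {v. length v = length gs})
      = (\<lambda>w. itinerary T A (g # gs) -` {w} \<inter> space M) ` {w. length w = length (g # gs)}"
  proof (intro equalityI subsetI)
    fix X assume "X \<in> join_part {E True, E False} (F ` {v. length v = length gs})"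
    then obtain b v where "X = E b \<inter> F v" "length v = length gs"
      unfolding join_part_def by blast
    then show "X \<in> (\<lambda>w. itinerary T A (g # gs) -` {w} \<inter> space M) ` {w. length w = length (g # gs)}"
      by (intro image_eqI[of _ _ "b # v"]) (simp_all add: EF)
  next
    fix X assume "X \<in> (\<lambda>w. itinerary T A (g # gs) -` {w} \<inter> space M) ` {w. length w = length (g # gs)}"
    then obtain b v where "X = itinerary T A (g # gs) -` {b # v} \<inter> space M" "length v = length gs"
      by (auto simp: length_Suc_conv)
    moreover have "E b \<in> {E True, E False}" by (cases b) simp_all
    ultimately show "X \<in> join_part {E True, E False} (F ` {v. length v = length gs})"
      unfolding join_part_def EF[symmetric] by blast
  qed
  then show ?case using Cons by (simp add: pull F_def)
qed

lemma part_entropy_join_pull_part: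
  assumes "set gs \<subseteq> S"
  shows "part_entropy M (join_list M (map (\<lambda>g. pull_part M T g {A, space M - A}) gs))
    = simple_entropy M (itinerary T A gs)"
  unfolding join_pull_part_eq_itinerary_fibres[OF assms]
proof (rule part_entropy_fibres)
  show "finite {v :: bool list. length v = length gs}"
    using finite_lists_length_eq[of "UNIV :: bool set" "length gs"] by simp
qed auto

end

section \<open>Growth rates of suprema over words\<close>

definition normalized_sup :: "('l list \<Rightarrow> real) \<Rightarrow> 'l set \<Rightarrow> nat \<Rightarrow> ereal" where
  "normalized_sup F S n =
     ereal (1 / real n) * Sup (insert 0 ((\<lambda>gs. ereal (F gs)) ` {gs. set gs \<subseteq> S \<and> length gs = n}))"

lemma normalized_sup_cong:
  assumes "\<And>gs. set gs \<subseteq> S \<Longrightarrow> F gs = F' gs"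
  shows "normalized_sup F S = normalized_sup F' S"
proof
  fix n
  have "(\<lambda>gs. ereal (F gs)) ` {gs. set gs \<subseteq> S \<and> length gs = n}
      = (\<lambda>gs. ereal (F' gs)) ` {gs. set gs \<subseteq> S \<and> length gs = n}"
    using assms by (intro image_cong) auto
  then show "normalized_sup F S n = normalized_sup F' S n" by (simp add: normalized_sup_def)
qed

lemma normalized_sup_zero: "normalized_sup (\<lambda>_. 0) S = (\<lambda>n. 0)"
  by (simp add: fun_eq_iff normalized_sup_def image_constant_conv)

lemma limsup_normalized_sup_nonneg: "0 \<le> limsup (normalized_sup F S)"
proof -
  have "0 \<le> normalized_sup F S n" for n
    unfolding normalized_sup_def by (intro ereal_0_le_mult Sup_upper) simp_all
  then have "0 \<le> liminf (normalized_sup F S)"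
    by (intro Liminf_bounded always_eventually allI)
  also have "\<dots> \<le> limsup (normalized_sup F S)"
    by (rule Liminf_le_Limsup) simp
  finally show ?thesis .
qed

lemma normalized_sup_le:
  assumes le: "\<And>gs. set gs \<subseteq> S \<Longrightarrow> F gs \<le> G gs + H gs + c * real (length gs)"
    and G: "\<And>gs. 0 \<le> G gs" and H: "\<And>gs. 0 \<le> H gs" and c: "0 \<le> c"
  shows "normalized_sup F S n \<le> normalized_sup G S n + normalized_sup H S n + ereal c"
proof -
  let ?W = "{gs. set gs \<subseteq> S \<and> length gs = n}"
  define SG where "SG = Sup (insert 0 ((\<lambda>gs. ereal (G gs)) ` ?W))"
  define SH where "SH = Sup (insert 0 ((\<lambda>gs. ereal (H gs)) ` ?W))"
  have "0 \<le> SG" "0 \<le> SH" unfolding SG_def SH_def by (simp_all add: Sup_upper)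
  have "Sup (insert 0 ((\<lambda>gs. ereal (F gs)) ` ?W)) \<le> SG + SH + ereal (c * real n)"
  proof (rule Sup_least)
    fix y assume "y \<in> insert 0 ((\<lambda>gs. ereal (F gs)) ` ?W)"
    then consider "y = 0" | gs where "gs \<in> ?W" "y = ereal (F gs)" by blast
    then show "y \<le> SG + SH + ereal (c * real n)"
    proof cases
      case 1
      then show ?thesis using \<open>0 \<le> SG\<close> \<open>0 \<le> SH\<close> c by simp
    next
      case 2
      then have "y \<le> ereal (G gs) + ereal (H gs) + ereal (c * real n)" using le[of gs] by simp
      also have "\<dots> \<le> SG + SH + ereal (c * real n)"
        unfolding SG_def SH_def using 2(1) by (intro add_mono Sup_upper) auto
      finally show ?thesis .
    qed
  qed
  then have "normalized_sup F S n \<le> ereal (1 / real n) * (SG + SH + ereal (c * real n))"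
    unfolding normalized_sup_def by (rule ereal_mult_left_mono) simp
  also have "\<dots> \<le> ereal (1 / real n) * (SG + SH) + ereal (1 / real n) * ereal (c * real n)"
    by (rule ereal_le_distrib)
  also have "\<dots> \<le> ereal (1 / real n) * SG + ereal (1 / real n) * SH + ereal (1 / real n) * ereal (c * real n)"
    by (intro add_mono ereal_le_distrib order_refl)
  also have "ereal (1 / real n) * ereal (c * real n) \<le> ereal c"
    using c by (cases "n = 0") auto
  finally show ?thesis by (simp add: normalized_sup_def SG_def SH_def add_mono)
qed

lemma limsup_normalized_sup_le:
  assumes "\<And>gs. set gs \<subseteq> S \<Longrightarrow> F gs \<le> G gs + H gs + c * real (length gs)"
    and "\<And>gs. 0 \<le> G gs" and "\<And>gs. 0 \<le> H gs" and "0 \<le> c"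
  shows "limsup (normalized_sup F S) \<le> limsup (normalized_sup G S) + limsup (normalized_sup H S) + ereal c"
proof -
  have "limsup (normalized_sup F S)
      \<le> limsup (\<lambda>n. (normalized_sup G S n + normalized_sup H S n) + ereal c)"
    using normalized_sup_le[OF assms] by (intro Limsup_mono always_eventually allI)
  also have "\<dots> \<le> limsup (\<lambda>n. normalized_sup G S n + normalized_sup H S n) + limsup (\<lambda>n. ereal c)"
    by (rule ereal_limsup_add_mono)
  also have "\<dots> \<le> limsup (normalized_sup G S) + limsup (normalized_sup H S) + ereal c"
    by (intro add_mono ereal_limsup_add_mono) (simp_all add: Limsup_const)
  finally show ?thesis .
qed

lemma limsup_normalized_sup_mono:
  assumes "\<And>gs. set gs \<subseteq> S \<Longrightarrow> \<exists>gs'. set gs' \<subseteq> S' \<and> length gs' = length gs \<and> F gs \<le> F' gs'"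
  shows "limsup (normalized_sup F S) \<le> limsup (normalized_sup F' S')"
proof (intro Limsup_mono always_eventually allI)
  fix n
  have "Sup (insert 0 ((\<lambda>gs. ereal (F gs)) ` {gs. set gs \<subseteq> S \<and> length gs = n})) \<le>
        Sup (insert 0 ((\<lambda>gs. ereal (F' gs)) ` {gs. set gs \<subseteq> S' \<and> length gs = n}))"
  proof (rule Sup_least)
    fix y assume "y \<in> insert 0 ((\<lambda>gs. ereal (F gs)) ` {gs. set gs \<subseteq> S \<and> length gs = n})"
    then consider "y = 0" | gs where "set gs \<subseteq> S" "length gs = n" "y = ereal (F gs)" by blast
    then show "y \<le> Sup (insert 0 ((\<lambda>gs. ereal (F' gs)) ` {gs. set gs \<subseteq> S' \<and> length gs = n}))"
    proof cases
      case 1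
      then show ?thesis by (simp add: Sup_upper)
    next
      case 2
      from assms[OF 2(1)] obtain gs' where gs': "set gs' \<subseteq> S'" "length gs' = length gs" "F gs \<le> F' gs'"
        by blast
      have "y \<le> ereal (F' gs')" using 2(3) gs'(3) by simp
      also have "\<dots> \<le> Sup (insert 0 ((\<lambda>gs. ereal (F' gs)) ` {gs. set gs \<subseteq> S' \<and> length gs = n}))"
        using gs' 2(2) by (intro Sup_upper) auto
      finally show ?thesis .
    qed
  qed
  then show "normalized_sup F S n \<le> normalized_sup F' S' n"
    unfolding normalized_sup_def by (rule ereal_mult_left_mono) simp
qed

section \<open>Sets of zero upper entropy\<close>

context prob_measure_preserving_family
begin

definition itinerary_entropy_rate :: "'a set \<Rightarrow> ereal" where
  "itinerary_entropy_rate A = limsup (normalized_sup (\<lambda>gs. simple_entropy M (itinerary T A gs)) S)"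

lemma upper_entropy_eq_itinerary_entropy_rate:
  "upper_entropy M T S {A, space M - A} = itinerary_entropy_rate A"
proof -
  have "normalized_sup (\<lambda>gs. part_entropy M (join_list M (map (\<lambda>g. pull_part M T g {A, space M - A}) gs))) S
      = normalized_sup (\<lambda>gs. simple_entropy M (itinerary T A gs)) S"
    by (rule normalized_sup_cong) (rule part_entropy_join_pull_part)
  then show ?thesis
    by (simp add: upper_entropy_def itinerary_entropy_rate_def normalized_sup_def[abs_def])
qed

definition zero_entropy_sets :: "'a set set" where
  "zero_entropy_sets = {A \<in> sets M. upper_entropy M T S {A, space M - A} = 0}"

lemma mem_zero_entropy_sets_iff:
  "A \<in> zero_entropy_sets \<longleftrightarrow> A \<in> sets M \<and> itinerary_entropy_rate A \<le> 0"
  using limsup_normalized_sup_nonneg[of "\<lambda>gs. simple_entropy M (itinerary T A gs)" S]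
  by (auto simp: zero_entropy_sets_def upper_entropy_eq_itinerary_entropy_rate itinerary_entropy_rate_def)

lemma empty_in_zero_entropy_sets: "{} \<in> zero_entropy_sets"
proof -
  have "itinerary T {} gs = (\<lambda>x. replicate (length gs) False)" for gs
    by (simp add: fun_eq_iff itinerary_def map_replicate_const)
  then have "simple_entropy M (itinerary T {} gs) = 0" for gs
    by (simp add: simple_entropy_const)
  then show ?thesis
    by (simp add: mem_zero_entropy_sets_iff itinerary_entropy_rate_def normalized_sup_zero Limsup_const)
qed

lemma Diff_in_zero_entropy_sets: "A \<in> zero_entropy_sets \<Longrightarrow> space M - A \<in> zero_entropy_sets"
proof -
  assume A: "A \<in> zero_entropy_sets"
  then have "A \<subseteq> space M" by (simp add: zero_entropy_sets_def sets.sets_into_space)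
  then have "{space M - A, space M - (space M - A)} = {A, space M - A}" by auto
  with A show ?thesis by (auto simp: zero_entropy_sets_def)
qed

lemma itinerary_entropy_rate_Un_le:
  assumes "B \<in> sets M" "D \<in> sets M"
  shows "itinerary_entropy_rate (B \<union> D) \<le> itinerary_entropy_rate B + itinerary_entropy_rate D"
proof -
  have "itinerary_entropy_rate (B \<union> D) \<le> itinerary_entropy_rate B + itinerary_entropy_rate D + ereal 0"
    unfolding itinerary_entropy_rate_def
    by (rule limsup_normalized_sup_le) (simp_all add: simple_entropy_itinerary_Un_le assms simple_entropy_nonneg)
  then show ?thesis by simp
qed

lemma itinerary_entropy_rate_Un_le_entropy:
  assumes "B \<in> sets M" "D \<in> sets M"
  shows "itinerary_entropy_rate (B \<union> D) \<le> itinerary_entropy_rate B + ereal (simple_entropy M (\<lambda>x. x \<in> D))"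
proof -
  have "itinerary_entropy_rate (B \<union> D)
      \<le> itinerary_entropy_rate B + limsup (normalized_sup (\<lambda>_. 0) S) + ereal (simple_entropy M (\<lambda>x. x \<in> D))"
    unfolding itinerary_entropy_rate_def
  proof (rule limsup_normalized_sup_le)
    fix gs assume gs: "set gs \<subseteq> S"
    have "simple_entropy M (itinerary T (B \<union> D) gs)
        \<le> simple_entropy M (itinerary T B gs) + simple_entropy M (itinerary T D gs)"
      by (rule simple_entropy_itinerary_Un_le[OF gs assms])
    also have "simple_entropy M (itinerary T D gs) \<le> real (length gs) * simple_entropy M (\<lambda>x. x \<in> D)"
      by (rule simple_entropy_itinerary_le[OF gs assms(2)])
    finally show "simple_entropy M (itinerary T (B \<union> D) gs)
        \<le> simple_entropy M (itinerary T B gs) + 0 + simple_entropy M (\<lambda>x. x \<in> D) * real (length gs)"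
      by (simp add: mult.commute)
  qed (simp_all add: simple_entropy_nonneg)
  then show ?thesis by (simp add: normalized_sup_zero Limsup_const)
qed

lemma Un_in_zero_entropy_sets:
  assumes "A \<in> zero_entropy_sets" "B \<in> zero_entropy_sets"
  shows "A \<union> B \<in> zero_entropy_sets"
proof -
  have sets: "A \<in> sets M" "B \<in> sets M" using assms by (simp_all add: mem_zero_entropy_sets_iff)
  then have "itinerary_entropy_rate (A \<union> B) \<le> itinerary_entropy_rate A + itinerary_entropy_rate B"
    by (rule itinerary_entropy_rate_Un_le)
  also have "\<dots> \<le> 0"
    using assms by (simp add: mem_zero_entropy_sets_iff add_nonpos_nonpos)
  finally show ?thesis using sets by (simp add: mem_zero_entropy_sets_iff)
qed

text \<open>The remainder \<open>U - B N\<close> adds at most its binary entropy, which tends to \<open>0\<close>.\<close>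

lemma mem_zero_entropy_sets_if_measure_approx:
  assumes B: "\<And>N. B N \<in> zero_entropy_sets" and U: "U \<in> sets M" and B_U: "\<And>N. B N \<subseteq> U"
    and lim: "(\<lambda>N. measure M (U - B N)) \<longlonglongrightarrow> 0"
  shows "U \<in> zero_entropy_sets"
proof -
  have Bs: "B N \<in> sets M" for N using B by (simp add: mem_zero_entropy_sets_iff)
  have bound: "itinerary_entropy_rate U \<le> ereal (simple_entropy M (\<lambda>x. x \<in> U - B N))" for N
  proof -
    have U_eq: "B N \<union> (U - B N) = U" using B_U by blast
    have "itinerary_entropy_rate U
        \<le> itinerary_entropy_rate (B N) + ereal (simple_entropy M (\<lambda>x. x \<in> U - B N))"
      using itinerary_entropy_rate_Un_le_entropy[OF Bs[of N] sets.Diff[OF U Bs[of N]]]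
      unfolding U_eq .
    moreover have "itinerary_entropy_rate (B N) \<le> 0" using B by (simp add: mem_zero_entropy_sets_iff)
    ultimately show ?thesis using order_trans[OF _ add_right_mono] by fastforce
  qed
  have "(\<lambda>N. simple_entropy M (\<lambda>x. x \<in> U - B N))
      = (\<lambda>N. - (prob (U - B N) * ln (prob (U - B N)) + (1 - prob (U - B N)) * ln (1 - prob (U - B N))))"
    by (intro ext simple_entropy_indicator sets.Diff U Bs)
  then have "(\<lambda>N. simple_entropy M (\<lambda>x. x \<in> U - B N)) \<longlonglongrightarrow> 0"
    using binary_entropy_tendsto_0[OF lim measure_nonneg] by simp
  then have "(\<lambda>N. ereal (simple_entropy M (\<lambda>x. x \<in> U - B N))) \<longlonglongrightarrow> 0"
    by (simp add: zero_ereal_def)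
  then have "itinerary_entropy_rate U \<le> 0"
    using bound by (intro tendsto_lowerbound[of _ 0 sequentially] always_eventually allI) simp_all
  then show ?thesis using U by (simp add: mem_zero_entropy_sets_iff)
qed

lemma UN_in_zero_entropy_sets:
  fixes A :: "nat \<Rightarrow> 'a set"
  assumes "range A \<subseteq> zero_entropy_sets"
  shows "(\<Union>i. A i) \<in> zero_entropy_sets"
proof (rule mem_zero_entropy_sets_if_measure_approx)
  have A: "A i \<in> zero_entropy_sets" for i using assms by blast
  then have As: "A i \<in> sets M" for i by (simp add: mem_zero_entropy_sets_iff)
  show "(\<Union>i<N. A i) \<in> zero_entropy_sets" for N
  proof (induction N)
    case (Suc N)
    then show ?case by (simp add: lessThan_Suc Un_in_zero_entropy_sets A)
  qed (simp add: empty_in_zero_entropy_sets)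
  show U: "(\<Union>i. A i) \<in> sets M" using As by blast
  show "(\<Union>i<N. A i) \<subseteq> (\<Union>i. A i)" for N by blast
  have "(\<lambda>N. measure M (\<Union>i<N. A i)) \<longlonglongrightarrow> measure M (\<Union>N. \<Union>i<N. A i)"
  proof (rule finite_Lim_measure_incseq)
    show "incseq (\<lambda>N. \<Union>i<N. A i)" by (intro monoI UN_mono) auto
  qed (use As in auto)
  moreover have "(\<Union>N. \<Union>i<N. A i) = (\<Union>i. A i)" by blast
  ultimately have "(\<lambda>N. measure M (\<Union>i<N. A i)) \<longlonglongrightarrow> measure M (\<Union>i. A i)" by simp
  then have "(\<lambda>N. measure M (\<Union>i. A i) - measure M (\<Union>i<N. A i)) \<longlonglongrightarrow> 0"
    using tendsto_diff[OF tendsto_const[of "measure M (\<Union>i. A i)"]] by fastforce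
  moreover have "measure M ((\<Union>i. A i) - (\<Union>i<N. A i)) = measure M (\<Union>i. A i) - measure M (\<Union>i<N. A i)" for N
    using As U by (intro finite_measure_Diff) auto
  ultimately show "(\<lambda>N. measure M ((\<Union>i. A i) - (\<Union>i<N. A i))) \<longlonglongrightarrow> 0" by simp
qed

lemma sigma_algebra_zero_entropy_sets: "sigma_algebra (space M) zero_entropy_sets"
  unfolding sigma_algebra_iff2
proof (intro conjI ballI allI impI)
  show "zero_entropy_sets \<subseteq> Pow (space M)"
    using sets.sets_into_space by (auto simp: zero_entropy_sets_def)
  show "{} \<in> zero_entropy_sets" by (rule empty_in_zero_entropy_sets)
  show "space M - A \<in> zero_entropy_sets" if "A \<in> zero_entropy_sets" for A
    using that by (rule Diff_in_zero_entropy_sets)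
  show "\<Union> (range A) \<in> zero_entropy_sets" if "range A \<subseteq> zero_entropy_sets" for A :: "nat \<Rightarrow> 'a set"
    using UN_in_zero_entropy_sets[OF that] by simp
qed

lemma vimage_in_zero_entropy_sets:
  assumes sys: "mps M G T" and S_eq: "S = carrier G"
    and g: "g \<in> carrier G" and A: "A \<in> zero_entropy_sets"
  shows "T g -` A \<inter> space M \<in> zero_entropy_sets"
proof -
  have grp: "group G" and T_mult: "\<And>h x. h \<in> carrier G \<Longrightarrow> x \<in> space M \<Longrightarrow> T (g \<otimes>\<^bsub>G\<^esub> h) x = T g (T h x)"
    using sys g by (simp_all add: mps_def)
  have As: "A \<in> sets M" using A by (simp add: mem_zero_entropy_sets_iff)
  have vimage: "T g -` A \<inter> space M \<in> sets M"
    using measurable_sets[OF measurable_T As] g S_eq by simp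
  have "itinerary_entropy_rate (T g -` A \<inter> space M) \<le> itinerary_entropy_rate A"
    unfolding itinerary_entropy_rate_def
  proof (rule limsup_normalized_sup_mono)
    fix gs assume gs: "set gs \<subseteq> S"
    define gs' where "gs' = map (\<lambda>h. g \<otimes>\<^bsub>G\<^esub> h) gs"
    have "set gs' \<subseteq> S"
      using gs g monoid.m_closed[OF group.is_monoid[OF grp]] unfolding gs'_def S_eq by auto
    moreover have "itinerary T (T g -` A \<inter> space M) gs x = itinerary T A gs' x" if x: "x \<in> space M" for x
    proof -
      have "T h x \<in> T g -` A \<inter> space M \<longleftrightarrow> T (g \<otimes>\<^bsub>G\<^esub> h) x \<in> A" if "h \<in> set gs" for h
        using that gs x measurable_space[OF measurable_T] T_mult unfolding S_eq by auto
      then show ?thesis by (simp add: itinerary_def gs'_def)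
    qed
    then have "simple_entropy M (itinerary T (T g -` A \<inter> space M) gs) = simple_entropy M (itinerary T A gs')"
      by (rule simple_entropy_cong)
    ultimately show "\<exists>gs'. set gs' \<subseteq> S \<and> length gs' = length gs \<and>
        simple_entropy M (itinerary T (T g -` A \<inter> space M) gs) \<le> simple_entropy M (itinerary T A gs')"
      by (intro exI[of _ gs']) (simp add: gs'_def)
  qed
  also have "\<dots> \<le> 0" using A by (simp add: mem_zero_entropy_sets_iff)
  finally show ?thesis using vimage by (simp add: mem_zero_entropy_sets_iff)
qed

end

theorem proposition4p5:
  fixes M :: "'a measure" and G :: "('g, 'b) monoid_scheme" and T :: "'g \<Rightarrow> 'a \<Rightarrow> 'a"
    and S :: "'g set"
  assumes sys: "mps M G T"
    and S: "S \<subseteq> carrier G"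
  shows
    \<comment> \<open>(1) closed linear subspace of L^2\<close>
    "({f. almost_periodic M T S f} \<subseteq> L2 M
      \<and> almost_periodic M T S (\<lambda>x. 0)
      \<and> (\<forall>f h. almost_periodic M T S f \<and> almost_periodic M T S h
              \<longrightarrow> almost_periodic M T S (\<lambda>x. f x + h x))
      \<and> (\<forall>c f. almost_periodic M T S f \<longrightarrow> almost_periodic M T S (\<lambda>x. c * f x))
      \<and> (\<forall>u f. (\<forall>n. almost_periodic M T S (u n)) \<and> f \<in> L2 M
              \<and> (\<lambda>n. L2_norm M (\<lambda>x. u n x - f x)) \<longlonglongrightarrow> 0
              \<longrightarrow> almost_periodic M T S f))
     \<and>
    \<comment> \<open>(2) zero-entropy sets form a sub-sigma-algebra, G-invariant when S = G\<close>
     (let C = {A \<in> sets M. upper_entropy M T S {A, space M - A} = 0} in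
        C \<subseteq> sets M \<and> sigma_algebra (space M) C
        \<and> (S = carrier G \<longrightarrow> (\<forall>g\<in>carrier G. \<forall>A\<in>C. T g -` A \<inter> space M \<in> C)))"
proof -
  have "prob_space M" "measure_preserving_family M T S"
    using sys S by (auto simp: mps_def measure_preserving_family_def)
  then interpret prob_measure_preserving_family M T S
    by (rule prob_measure_preserving_family.intro)
  have closed_subspace: "{f. almost_periodic M T S f} \<subseteq> L2 M
      \<and> almost_periodic M T S (\<lambda>x. 0)
      \<and> (\<forall>f h. almost_periodic M T S f \<and> almost_periodic M T S h
              \<longrightarrow> almost_periodic M T S (\<lambda>x. f x + h x))
      \<and> (\<forall>c f. almost_periodic M T S f \<longrightarrow> almost_periodic M T S (\<lambda>x. c * f x))
      \<and> (\<forall>u f. (\<forall>n. almost_periodic M T S (u n)) \<and> f \<in> L2 M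
              \<and> (\<lambda>n. L2_norm M (\<lambda>x. u n x - f x)) \<longlonglongrightarrow> 0
              \<longrightarrow> almost_periodic M T S f)"
    by (auto intro: almost_periodic_L2 almost_periodic_zero almost_periodic_add
        almost_periodic_mult almost_periodic_L2_limit)
  have "zero_entropy_sets \<subseteq> sets M" by (auto simp: zero_entropy_sets_def)
  with closed_subspace sigma_algebra_zero_entropy_sets vimage_in_zero_entropy_sets[OF sys]
  show ?thesis unfolding Let_def zero_entropy_sets_def by blast
qed

end
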